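(* Let $W$ be a finite-dimensional real inner-product space, $\tau>0$, $\mathcal{Q},\mathcal{K}:W\to\mathbb{R}^{d_k}$ and $\mathcal{V}:W\to\mathbb{R}^{d_v}$ linear maps, and $\mu$ a Borel probability measure on $W$ with bounded support. Let $z_1,z_2,\dots$ be i.i.d. random variables with law $\mu$. Then, almost surely, $$\frac1N\sum_{j=1}^N\frac{\sum_{i=1}^N\exp(\langle\mathcal{Q}z_j,\mathcal{K}z_i\rangle/\tau)\,\mathcal{V}z_i}{\sum_{t=1}^N\exp(\langle\mathcal{Q}z_j,\mathcal{K}z_t\rangle/\tau)}\;\xrightarrow[N\to\infty]{}\;\int_W\frac{\int_W\exp(\langle\mathcal{Q}z,\mathcal{K}z'\rangle/\tau)\,\mathcal{V}z'\,\mu(dz')}{\int_W\exp(\langle\mathcal{Q}z,\mathcal{K}s\rangle/\tau)\,\mu(ds)}\,\mu(dz).$$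
   Context: Integrals of $\mathbb{R}^{d_v}$-valued functions are taken componentwise; $\langle\cdot,\cdot\rangle$ is the Euclidean inner product on $\mathbb{R}^{d_k}$. *)

theory Defs
  imports "HOL-Probability.Probability"
begin

end

theory Submission
  imports Defs
begin

text \<open>
  Write \<open>k z s = exp ((Q z \<bullet> K s) / tau)\<close> and \<open>\<phi> z s = k z s *\<^sub>R V s\<close>. Since \<open>mu\<close> is
  concentrated on a compact set \<open>C\<close>, both kernels are bounded and uniformly continuous on
  \<open>C \<times> C\<close>, and \<open>k\<close> is bounded below there by a positive constant. The strong law of large
  numbers for bounded i.i.d. variables (Hoeffding's inequality plus Borel--Cantelli), applied at
  the points of a countable dense subset of \<open>C\<close> and combined with equicontinuity, shows that
  almost surely the empirical means \<open>(1/N) \<Sum>\<^sub>i k z (Z i)\<close> and \<open>(1/N) \<Sum>\<^sub>i \<phi> z (Z i)\<close> converge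
  uniformly in \<open>z \<in> C\<close> to \<open>\<integral>k z d\<mu>\<close> and \<open>\<integral>\<phi> z d\<mu>\<close>; hence so do their quotients, whose
  limit \<open>F\<close> is the integrand on the right-hand side. By uniformity, the outer average over
  \<open>j\<close> then has the same limit as \<open>(1/N) \<Sum>\<^sub>j F (Z j)\<close>, which is \<open>\<integral>F d\<mu>\<close> by the strong law once more.
\<close>

section \<open>Averages and uniform limits\<close>

lemma norm_average_le:
  fixes a :: "nat \<Rightarrow> 'x::real_normed_vector"
  assumes "\<And>i. norm (a i) \<le> e" and "e \<ge> 0"
  shows "norm ((1 / real N) *\<^sub>R (\<Sum>i=1..N. a i)) \<le> e"
proof (cases "N = 0")
  case False
  have "norm (\<Sum>i=1..N. a i) \<le> (\<Sum>i=1..N. e)"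
    using assms(1) by (intro order_trans[OF norm_sum sum_mono])
  then show ?thesis
    using False by (simp add: field_simps)
qed (use assms in simp)

lemma compact_finite_net_in_dense:
  fixes C D :: "'a::metric_space set"
  assumes "compact C" and "C \<subseteq> closure D" and "\<delta> > 0"
  obtains T where "T \<subseteq> D" and "finite T" and "\<And>z. z \<in> C \<Longrightarrow> \<exists>d\<in>T. dist d z < \<delta>"
proof -
  have "C \<subseteq> (\<Union>d\<in>D. ball d \<delta>)"
  proof
    fix z assume "z \<in> C"
    with assms(2,3) obtain d where "d \<in> D" "dist d z < \<delta>"
      using closure_approachable by blast
    then show "z \<in> (\<Union>d\<in>D. ball d \<delta>)"
      by auto
  qed
  with assms(1) obtain T where "T \<subseteq> D" "finite T" "C \<subseteq> (\<Union>d\<in>T. ball d \<delta>)"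
    by (elim compactE_image) auto
  then show ?thesis
    by (intro that) (auto simp: subset_iff)
qed

lemma equicontinuous_kernel_averages:
  fixes \<phi> :: "'w::metric_space \<Rightarrow> 'w \<Rightarrow> 'x::real_normed_vector" and x :: "nat \<Rightarrow> 'w"
  assumes \<phi>: "uniformly_continuous_on (C \<times> C) (\<lambda>(z, s). \<phi> z s)" and x: "\<And>i. x i \<in> C"
    and "\<epsilon> > 0"
  obtains \<delta> where "\<delta> > 0" and "\<And>N z d. z \<in> C \<Longrightarrow> d \<in> C \<Longrightarrow> dist d z < \<delta> \<Longrightarrow>
    dist ((1 / real N) *\<^sub>R (\<Sum>i=1..N. \<phi> z (x i))) ((1 / real N) *\<^sub>R (\<Sum>i=1..N. \<phi> d (x i))) \<le> \<epsilon>"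
proof -
  obtain \<delta> where "\<delta> > 0" and \<delta>: "\<And>p p'. p \<in> C \<times> C \<Longrightarrow> p' \<in> C \<times> C \<Longrightarrow> dist p' p < \<delta> \<Longrightarrow>
      dist ((\<lambda>(z, s). \<phi> z s) p') ((\<lambda>(z, s). \<phi> z s) p) < \<epsilon>"
    using \<phi> \<open>\<epsilon> > 0\<close> unfolding uniformly_continuous_on_def by metis
  show ?thesis
  proof (rule that[OF \<open>\<delta> > 0\<close>])
    fix N z d assume "z \<in> C" "d \<in> C" "dist d z < \<delta>"
    then have "norm (\<phi> z (x i) - \<phi> d (x i)) \<le> \<epsilon>" for i
      using \<delta>[of "(z, x i)" "(d, x i)"] x[of i] by (simp add: dist_Pair_Pair dist_norm norm_minus_commute)
    then have "norm ((1 / real N) *\<^sub>R (\<Sum>i=1..N. \<phi> z (x i) - \<phi> d (x i))) \<le> \<epsilon>"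
      using \<open>\<epsilon> > 0\<close> by (intro norm_average_le) simp_all
    then show "dist ((1 / real N) *\<^sub>R (\<Sum>i=1..N. \<phi> z (x i))) ((1 / real N) *\<^sub>R (\<Sum>i=1..N. \<phi> d (x i))) \<le> \<epsilon>"
      by (simp add: dist_norm sum_subtractf scaleR_diff_right)
  qed
qed

lemma uniform_limit_kernel_averages:
  fixes \<phi> :: "'w::metric_space \<Rightarrow> 'w \<Rightarrow> 'x::real_normed_vector" and x :: "nat \<Rightarrow> 'w"
  assumes C: "compact C" and D: "D \<subseteq> C" "C \<subseteq> closure D"
    and \<phi>: "continuous_on (C \<times> C) (\<lambda>(z, s). \<phi> z s)" and \<Phi>: "continuous_on C \<Phi>"
    and x: "\<And>i. x i \<in> C"
    and lim: "\<And>d. d \<in> D \<Longrightarrow> (\<lambda>N. (1 / real N) *\<^sub>R (\<Sum>i=1..N. \<phi> d (x i))) \<longlonglongrightarrow> \<Phi> d"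
  shows "uniform_limit C (\<lambda>N z. (1 / real N) *\<^sub>R (\<Sum>i=1..N. \<phi> z (x i))) \<Phi> sequentially"
proof (rule uniform_limitI)
  fix \<epsilon> :: real assume "\<epsilon> > 0"
  then have "\<epsilon> / 3 > 0"
    by simp
  define avg where "avg N z = (1 / real N) *\<^sub>R (\<Sum>i=1..N. \<phi> z (x i))" for N z
  obtain \<delta>1 where "\<delta>1 > 0"
    and avg_close: "\<And>N z d. z \<in> C \<Longrightarrow> d \<in> C \<Longrightarrow> dist d z < \<delta>1 \<Longrightarrow>
      dist (avg N z) (avg N d) \<le> \<epsilon> / 3"
    using equicontinuous_kernel_averages[where x = x, OF compact_uniformly_continuous[OF \<phi> compact_Times[OF C C]] x
        \<open>\<epsilon> / 3 > 0\<close>]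
    unfolding avg_def by blast
  obtain \<delta>2 where "\<delta>2 > 0"
    and limit_close: "\<forall>z\<in>C. \<forall>d\<in>C. dist d z < \<delta>2 \<longrightarrow> dist (\<Phi> d) (\<Phi> z) < \<epsilon> / 3"
    using compact_uniformly_continuous[OF \<Phi> C] \<open>\<epsilon> / 3 > 0\<close> unfolding uniformly_continuous_on_def by blast
  have "min \<delta>1 \<delta>2 > 0"
    using \<open>\<delta>1 > 0\<close> \<open>\<delta>2 > 0\<close> by simp
  then obtain T where T: "T \<subseteq> D" "finite T" "\<And>z. z \<in> C \<Longrightarrow> \<exists>d\<in>T. dist d z < min \<delta>1 \<delta>2"
    using compact_finite_net_in_dense[OF C D(2)] by blast
  have "\<forall>\<^sub>F N in sequentially. \<forall>d\<in>T. dist (avg N d) (\<Phi> d) < \<epsilon> / 3"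
  proof (intro eventually_ball_finite ballI T(2))
    fix d assume "d \<in> T"
    with T(1) lim \<open>\<epsilon> / 3 > 0\<close> show "\<forall>\<^sub>F N in sequentially. dist (avg N d) (\<Phi> d) < \<epsilon> / 3"
      unfolding avg_def tendsto_iff by blast
  qed
  then show "\<forall>\<^sub>F N in sequentially. \<forall>z\<in>C. dist (avg N z) (\<Phi> z) < \<epsilon>"
  proof eventually_elim
    case (elim N)
    show ?case
    proof
      fix z assume "z \<in> C"
      then obtain d where "d \<in> T" and d: "dist d z < min \<delta>1 \<delta>2"
        using T(3) by blast
      with T(1) D(1) have "d \<in> C"
        by auto
      have "dist (avg N z) (avg N d) \<le> \<epsilon> / 3" "dist (avg N d) (\<Phi> d) < \<epsilon> / 3"
        "dist (\<Phi> d) (\<Phi> z) < \<epsilon> / 3"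
        using avg_close[OF \<open>z \<in> C\<close> \<open>d \<in> C\<close>] elim \<open>d \<in> T\<close> limit_close \<open>z \<in> C\<close> \<open>d \<in> C\<close> d
        by simp_all
      then show "dist (avg N z) (\<Phi> z) < \<epsilon>"
        using dist_triangle[of "avg N z" "\<Phi> z" "avg N d"] dist_triangle[of "avg N d" "\<Phi> z" "\<Phi> d"]
        by linarith
    qed
  qed
qed

lemma tendsto_average_of_uniform_limit:
  fixes F :: "nat \<Rightarrow> 'w \<Rightarrow> 'x::real_normed_vector"
  assumes F: "uniform_limit C F G sequentially" and x: "\<And>i. x i \<in> C"
    and G: "(\<lambda>N. (1 / real N) *\<^sub>R (\<Sum>i=1..N. G (x i))) \<longlonglongrightarrow> L"
  shows "(\<lambda>N. (1 / real N) *\<^sub>R (\<Sum>i=1..N. F N (x i))) \<longlonglongrightarrow> L"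
proof -
  have "(\<lambda>N. (1 / real N) *\<^sub>R (\<Sum>i=1..N. F N (x i) - G (x i))) \<longlonglongrightarrow> 0"
  proof (rule tendstoI)
    fix \<epsilon> :: real assume "\<epsilon> > 0"
    then have "\<forall>\<^sub>F N in sequentially. \<forall>z\<in>C. dist (F N z) (G z) < \<epsilon> / 2"
      by (intro uniform_limitD[OF F]) simp
    then show "\<forall>\<^sub>F N in sequentially. dist ((1 / real N) *\<^sub>R (\<Sum>i=1..N. F N (x i) - G (x i))) 0 < \<epsilon>"
    proof eventually_elim
      case (elim N)
      have "norm ((1 / real N) *\<^sub>R (\<Sum>i=1..N. F N (x i) - G (x i))) \<le> \<epsilon> / 2"
        using elim x \<open>\<epsilon> > 0\<close> by (intro norm_average_le) (auto simp: dist_norm less_imp_le)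
      then show ?case
        unfolding dist_norm diff_zero using \<open>\<epsilon> > 0\<close> by linarith
    qed
  qed
  from tendsto_add[OF this G] show ?thesis
    by (simp add: sum_subtractf scaleR_diff_right)
qed

lemma uniform_limit_scaleR_inverse:
  fixes g :: "'i \<Rightarrow> 'w \<Rightarrow> real" and h :: "'i \<Rightarrow> 'w \<Rightarrow> 'x::real_normed_vector"
  assumes g: "uniform_limit C g G F" and h: "uniform_limit C h H F"
    and G: "\<And>z. z \<in> C \<Longrightarrow> c \<le> G z" "c > 0" and H: "bounded (H ` C)"
  shows "uniform_limit C (\<lambda>n z. (1 / g n z) *\<^sub>R h n z) (\<lambda>z. (1 / G z) *\<^sub>R H z) F"
proof -
  have inverse_limit: "uniform_limit C (\<lambda>n z. inverse (g n z)) (inverse \<circ> G) F"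
    using G by (intro uniform_lim_inverse[OF g, of c]) force+
  have inverse_bounded: "bounded ((inverse \<circ> G) ` C)"
    unfolding bounded_iff using G by (intro exI[of _ "inverse c"]) (force intro: le_imp_inverse_le)
  from bounded_bilinear.bounded_uniform_limit[OF bounded_bilinear_scaleR inverse_limit h H inverse_bounded]
  show ?thesis
    by (simp add: inverse_eq_divide comp_def)
qed

lemma tendsto_self_normalized_average:
  fixes k :: "'w \<Rightarrow> 'w \<Rightarrow> real" and \<phi> :: "'w \<Rightarrow> 'w \<Rightarrow> 'x::real_normed_vector" and x :: "nat \<Rightarrow> 'w"
  assumes x: "\<And>i. x i \<in> C"
    and k: "uniform_limit C (\<lambda>N z. (1 / real N) *\<^sub>R (\<Sum>i=1..N. k z (x i))) G sequentially"
    and \<phi>: "uniform_limit C (\<lambda>N z. (1 / real N) *\<^sub>R (\<Sum>i=1..N. \<phi> z (x i))) H sequentially"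
    and G: "\<And>z. z \<in> C \<Longrightarrow> c \<le> G z" "c > 0" and H: "bounded (H ` C)"
    and lim: "(\<lambda>N. (1 / real N) *\<^sub>R (\<Sum>j=1..N. (1 / G (x j)) *\<^sub>R H (x j))) \<longlonglongrightarrow> L"
  shows "(\<lambda>N. (1 / real N) *\<^sub>R
    (\<Sum>j=1..N. (1 / (\<Sum>t=1..N. k (x j) (x t))) *\<^sub>R (\<Sum>i=1..N. \<phi> (x j) (x i)))) \<longlonglongrightarrow> L"
proof -
  have "(\<lambda>N. (1 / real N) *\<^sub>R (\<Sum>j=1..N. (1 / ((1 / real N) *\<^sub>R (\<Sum>t=1..N. k (x j) (x t)))) *\<^sub>R
      ((1 / real N) *\<^sub>R (\<Sum>i=1..N. \<phi> (x j) (x i))))) \<longlonglongrightarrow> L"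
    by (rule tendsto_average_of_uniform_limit[OF uniform_limit_scaleR_inverse[OF k \<phi> G H] x lim])
  \<comment> \<open>The two factors \<open>1 / real N\<close> cancel because \<open>j \<in> {1..N}\<close> forces \<open>N \<noteq> 0\<close>.\<close>
  moreover have "(1 / ((1 / real N) *\<^sub>R (\<Sum>t=1..N. k (x j) (x t)))) *\<^sub>R ((1 / real N) *\<^sub>R (\<Sum>i=1..N. \<phi> (x j) (x i)))
      = (1 / (\<Sum>t=1..N. k (x j) (x t))) *\<^sub>R (\<Sum>i=1..N. \<phi> (x j) (x i))" if "j \<in> {1..N}" for N j
    using that by (cases "(\<Sum>t=1..N. k (x j) (x t)) = 0") auto
  ultimately show ?thesis
    by (simp only: cong: sum.cong)
qed

lemma continuous_on_compact_pos_lower_bound: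
  fixes f :: "'a::topological_space \<Rightarrow> real"
  assumes "compact S" and "continuous_on S f" and "\<And>x. x \<in> S \<Longrightarrow> 0 < f x"
  obtains c where "c > 0" and "\<And>x. x \<in> S \<Longrightarrow> c \<le> f x"
proof (cases "S = {}")
  case False
  then obtain x0 where "x0 \<in> S" "\<And>x. x \<in> S \<Longrightarrow> f x0 \<le> f x"
    using continuous_attains_inf[OF assms(1) _ assms(2)] by blast
  with assms(3) show ?thesis
    by (intro that[of "f x0"]) auto
qed (use that[of 1] in simp)

section \<open>Integrals depending on a parameter\<close>

lemma continuous_on_slice:
  assumes "continuous_on UNIV (\<lambda>(z, s). \<phi> z s)"
  shows "continuous_on UNIV (\<phi> z)"
proof -
  have "continuous_on UNIV ((\<lambda>(z, s). \<phi> z s) \<circ> Pair z)"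
    by (intro continuous_on_compose continuous_intros continuous_on_subset[OF assms]) auto
  then show ?thesis
    by (simp add: comp_def)
qed

lemma integrable_continuous_compact_support:
  fixes M :: "'w::topological_space measure" and f :: "'w \<Rightarrow> 'x::{banach, second_countable_topology}"
  assumes "finite_measure M" and "sets M = sets borel" and "compact C" and "AE s in M. s \<in> C"
    and "continuous_on UNIV f"
  shows "integrable M f"
proof -
  obtain B where "\<And>s. s \<in> C \<Longrightarrow> norm (f s) \<le> B"
    using continuous_on_compact_bound[OF assms(3) continuous_on_subset[OF assms(5)]] by blast
  with assms(4) have "AE s in M. norm (f s) \<le> B"
    by (auto elim: eventually_mono)
  moreover have "f \<in> borel_measurable M"
    using borel_measurable_continuous_onI[OF assms(5)] by (simp add: measurable_cong_sets[OF assms(2) refl])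
  ultimately show ?thesis
    by (rule finite_measure.integrable_const_bound[OF assms(1)])
qed

lemma borel_measurable_parametric_integral:
  fixes M :: "'w::second_countable_topology measure"
    and \<phi> :: "'z::second_countable_topology \<Rightarrow> 'w \<Rightarrow> 'x::{banach, second_countable_topology}"
  assumes "sigma_finite_measure M" and "sets M = sets borel" and "continuous_on UNIV (\<lambda>(z, s). \<phi> z s)"
  shows "(\<lambda>z. \<integral>s. \<phi> z s \<partial>M) \<in> borel_measurable borel"
proof (rule sigma_finite_measure.borel_measurable_lebesgue_integral[OF assms(1)])
  have "sets (borel \<Otimes>\<^sub>M M) = sets (borel \<Otimes>\<^sub>M borel :: ('z \<times> 'w) measure)"
    using assms(2) by (intro sets_pair_measure_cong) simp_all
  also have "\<dots> = sets borel"
    by (subst borel_prod) (rule refl)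
  finally have sets_eq: "sets (borel \<Otimes>\<^sub>M M) = sets (borel :: ('z \<times> 'w) measure)" .
  show "case_prod \<phi> \<in> borel_measurable (borel \<Otimes>\<^sub>M M)"
    using borel_measurable_continuous_onI[OF assms(3)] by (simp add: measurable_cong_sets[OF sets_eq refl])
qed

lemma uniformly_continuous_on_parametric_integral:
  fixes M :: "'w::metric_space measure"
    and \<phi> :: "'z::metric_space \<Rightarrow> 'w \<Rightarrow> 'x::{banach, second_countable_topology}"
  assumes "prob_space M" and C: "AE s in M. s \<in> C" and \<phi>: "uniformly_continuous_on (S \<times> C) (\<lambda>(z, s). \<phi> z s)"
    and int: "\<And>z. z \<in> S \<Longrightarrow> integrable M (\<phi> z)"
  shows "uniformly_continuous_on S (\<lambda>z. \<integral>s. \<phi> z s \<partial>M)"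
  unfolding uniformly_continuous_on_def
proof (intro allI impI)
  interpret prob_space M by fact
  fix \<epsilon> :: real assume "\<epsilon> > 0"
  then obtain \<delta> where "\<delta> > 0" and \<delta>: "\<And>p p'. p \<in> S \<times> C \<Longrightarrow> p' \<in> S \<times> C \<Longrightarrow> dist p' p < \<delta> \<Longrightarrow>
      dist ((\<lambda>(z, s). \<phi> z s) p') ((\<lambda>(z, s). \<phi> z s) p) < \<epsilon> / 2"
    using \<phi> unfolding uniformly_continuous_on_def by (meson half_gt_zero)
  have "dist (\<integral>s. \<phi> z' s \<partial>M) (\<integral>s. \<phi> z s \<partial>M) < \<epsilon>"
    if "z \<in> S" "z' \<in> S" "dist z' z < \<delta>" for z z'
  proof -
    have "dist (\<integral>s. \<phi> z' s \<partial>M) (\<integral>s. \<phi> z s \<partial>M) = norm (\<integral>s. \<phi> z' s - \<phi> z s \<partial>M)"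
      using that by (simp add: dist_norm int)
    also have "\<dots> \<le> (\<integral>s. norm (\<phi> z' s - \<phi> z s) \<partial>M)"
      by (rule integral_norm_bound)
    also have "\<dots> \<le> (\<integral>s. \<epsilon> / 2 \<partial>M)"
    proof (rule integral_mono_AE)
      show "AE s in M. norm (\<phi> z' s - \<phi> z s) \<le> \<epsilon> / 2"
        using C
      proof eventually_elim
        case (elim s)
        have "dist (z', s) (z, s) < \<delta>"
          using that by (simp add: dist_Pair_Pair)
        with \<delta>[of "(z, s)" "(z', s)"] that elim show ?case
          by (simp add: dist_norm)
      qed
    qed (use that int in auto)
    also have "\<dots> < \<epsilon>"
      using \<open>\<epsilon> > 0\<close> by (simp add: prob_space)
    finally show ?thesis .
  qed
  with \<open>\<delta> > 0\<close> show "\<exists>\<delta>>0. \<forall>z\<in>S. \<forall>z'\<in>S. dist z' z < \<delta> \<longrightarrow>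
      dist (\<integral>s. \<phi> z' s \<partial>M) (\<integral>s. \<phi> z s \<partial>M) < \<epsilon>"
    by blast
qed

lemma continuous_on_parametric_integral_compact_support:
  fixes M :: "'w::metric_space measure" and \<phi> :: "'w \<Rightarrow> 'w \<Rightarrow> 'x::{banach, second_countable_topology}"
  assumes M: "prob_space M" "sets M = sets borel" and C: "compact C" "AE s in M. s \<in> C"
    and \<phi>: "continuous_on UNIV (\<lambda>(z, s). \<phi> z s)"
  shows "continuous_on C (\<lambda>z. \<integral>s. \<phi> z s \<partial>M)"
proof (rule uniformly_continuous_imp_continuous)
  have "finite_measure M"
    using M(1) by (simp add: prob_space_def)
  then have "integrable M (\<phi> z)" for z
    using M(2) C continuous_on_slice[OF \<phi>] by (rule integrable_continuous_compact_support)
  moreover have "uniformly_continuous_on (C \<times> C) (\<lambda>(z, s). \<phi> z s)"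
    using C(1) by (intro compact_uniformly_continuous continuous_on_subset[OF \<phi>] compact_Times) auto
  ultimately show "uniformly_continuous_on C (\<lambda>z. \<integral>s. \<phi> z s \<partial>M)"
    using M(1) C(2) by (intro uniformly_continuous_on_parametric_integral)
qed

section \<open>Strong laws of large numbers\<close>

lemma (in prob_space) strong_law_bounded_iid:
  fixes X :: "nat \<Rightarrow> 'a \<Rightarrow> real"
  assumes indep: "indep_vars (\<lambda>_. borel) X UNIV"
    and distr: "\<And>i. distr M borel (X i) = distr M borel (X 0)"
    and bounded: "AE x in M. X 0 x \<in> {a..b}"
  shows "AE x in M. (\<lambda>n. (\<Sum>i=1..n. X i x) / n) \<longlonglongrightarrow> expectation (X 0)"
proof -
  define \<mu> where "\<mu> = expectation (X 0)"
  have [measurable]: "X i \<in> borel_measurable M" for i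
    using indep by (auto simp: indep_vars_def)
  have "AE x in M. a \<le> b"
    using bounded by eventually_elim auto
  then have "a \<le> b"
    by simp
  define q where "q \<epsilon> = exp (-2 * \<epsilon>\<^sup>2 / (b + 1 - a)\<^sup>2)" for \<epsilon>
  have deviation_bound: "prob {x \<in> space M. \<epsilon> \<le> \<bar>(\<Sum>i=1..n. X i x) / n - \<mu>\<bar>} \<le> 2 * q \<epsilon> ^ n"
    if "\<epsilon> \<ge> 0" "n \<ge> 1" for \<epsilon> n
  proof -
    \<comment> \<open>Hoeffding's inequality is stated for nondegenerate intervals, hence \<open>b + 1\<close>.\<close>
    interpret Hoeffding_ineq_iid M "{1..n}" X "X 0" a "b + 1" \<mu>
      using indep_vars_subset[OF indep] distr bounded
      by unfold_locales (auto simp: \<mu>_def elim: eventually_mono)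
    have "q \<epsilon> ^ n = exp (-2 * n * \<epsilon>\<^sup>2 / (b + 1 - a)\<^sup>2)"
      by (simp add: q_def flip: exp_of_nat_mult)
    then show ?thesis
      using Hoeffding_ineq_abs_ge'[of \<epsilon>] that \<open>a \<le> b\<close> by simp
  qed
  have eventually_close: "AE x in M. \<forall>\<^sub>F n in sequentially. \<bar>(\<Sum>i=1..n. X i x) / n - \<mu>\<bar> < \<epsilon>"
    if "\<epsilon> > 0" for \<epsilon>
  proof -
    define A where "A n = {x \<in> space M. \<epsilon> \<le> \<bar>(\<Sum>i=1..n. X i x) / n - \<mu>\<bar>}" for n
    have "q \<epsilon> < 1"
      using that \<open>a \<le> b\<close> by (simp add: q_def)
    then have "summable (\<lambda>n. 2 * q \<epsilon> ^ n)"
      by (simp add: q_def)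
    then have "summable (\<lambda>n. prob (A n))"
    proof (rule summable_comparison_test'[where N = 1])
      show "norm (prob (A n)) \<le> 2 * q \<epsilon> ^ n" if "n \<ge> 1" for n
        using deviation_bound[of \<epsilon> n] that \<open>\<epsilon> > 0\<close> by (simp add: A_def)
    qed
    then have "AE x in M. \<forall>\<^sub>F n in sequentially. x \<in> space M - A n"
      by (intro borel_cantelli_AE1) (simp_all add: A_def less_top[symmetric])
    then show ?thesis
      by (auto simp: A_def elim!: eventually_mono)
  qed
  have "AE x in M. \<forall>m. \<forall>\<^sub>F n in sequentially. \<bar>(\<Sum>i=1..n. X i x) / n - \<mu>\<bar> < 1 / Suc m"
    unfolding AE_all_countable by (intro allI eventually_close) simp
  then show ?thesis
  proof eventually_elim
    case (elim x)
    show ?case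
    proof (rule tendstoI)
      fix \<epsilon> :: real assume "\<epsilon> > 0"
      then obtain m where "1 / Suc m < \<epsilon>"
        using nat_approx_posE by blast
      then show "\<forall>\<^sub>F n in sequentially. dist ((\<Sum>i=1..n. X i x) / n) (expectation (X 0)) < \<epsilon>"
        using elim[rule_format, of m] by (auto simp: dist_real_def \<mu>_def elim: eventually_mono)
    qed
  qed
qed

lemma (in prob_space) strong_law_bounded_function:
  fixes Z :: "nat \<Rightarrow> 'a \<Rightarrow> 'w::topological_space" and f :: "'w \<Rightarrow> 'v::euclidean_space"
  assumes indep: "indep_vars (\<lambda>_. borel) Z UNIV"
    and distr: "\<And>i. distr M borel (Z i) = mu"
    and f [measurable]: "f \<in> borel_measurable borel"
    and bounded: "AE z in mu. norm (f z) \<le> B"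
  shows "AE x in M. (\<lambda>N. (1 / real N) *\<^sub>R (\<Sum>i=1..N. f (Z i x))) \<longlonglongrightarrow> integral\<^sup>L mu f"
proof -
  have [measurable]: "Z i \<in> borel_measurable M" for i
    using indep by (auto simp: indep_vars_def)
  interpret mu: prob_space mu
    unfolding distr[of 0, symmetric] by (rule prob_space_distr) simp
  have "integrable mu f"
    using bounded by (intro mu.integrable_const_bound[of _ B]) (simp_all add: flip: distr[of 0])
  have component: "AE x in M. (\<lambda>N. (\<Sum>i=1..N. f (Z i x) \<bullet> e) / N) \<longlonglongrightarrow> integral\<^sup>L mu f \<bullet> e"
    if e: "e \<in> Basis" for e
  proof -
    define X where "X i x = f (Z i x) \<bullet> e" for i x
    have "indep_vars (\<lambda>_. borel) X UNIV"
      unfolding X_def by (rule indep_vars_compose2[OF indep]) simp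
    moreover have "distr M borel (X i) = distr mu borel (\<lambda>z. f z \<bullet> e)" for i
      unfolding X_def distr[of i, symmetric] by (subst distr_distr) (simp_all add: comp_def)
    moreover have "AE x in M. X 0 x \<in> {-B..B}"
    proof -
      have "AE z in mu. f z \<bullet> e \<in> {-B..B}"
        using bounded by eventually_elim (metis Basis_le_norm[OF e] abs_le_iff atLeastAtMost_iff order_trans minus_le_iff)
      then show ?thesis
        unfolding X_def distr[of 0, symmetric] by (subst (asm) AE_distr_iff) simp_all
    qed
    ultimately have "AE x in M. (\<lambda>N. (\<Sum>i=1..N. X i x) / N) \<longlonglongrightarrow> expectation (X 0)"
      by (intro strong_law_bounded_iid) auto
    moreover have "expectation (X 0) = (\<integral>z. f z \<bullet> e \<partial>mu)"
      unfolding X_def by (simp add: integral_distr flip: distr[of 0])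
    ultimately show ?thesis
      using \<open>integrable mu f\<close> by (simp add: X_def)
  qed
  have "AE x in M. \<forall>e\<in>Basis. (\<lambda>N. (\<Sum>i=1..N. f (Z i x) \<bullet> e) / N) \<longlonglongrightarrow> integral\<^sup>L mu f \<bullet> e"
    by (intro AE_finite_allI component) simp
  then show ?thesis
    by eventually_elim (simp add: tendsto_componentwise_iff[of _ "integral\<^sup>L mu f"] inner_sum_left divide_inverse mult.commute)
qed

lemma (in prob_space) strong_law_continuous_on_support:
  fixes Z :: "nat \<Rightarrow> 'a \<Rightarrow> 'w::metric_space" and f :: "'w \<Rightarrow> 'v::euclidean_space"
  assumes indep: "indep_vars (\<lambda>_. borel) Z UNIV" and distr: "\<And>i. distr M borel (Z i) = mu"
    and C: "compact C" and support: "AE s in mu. s \<in> C"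
    and f: "f \<in> borel_measurable borel" "continuous_on C f"
  shows "AE x in M. (\<lambda>N. (1 / real N) *\<^sub>R (\<Sum>i=1..N. f (Z i x))) \<longlonglongrightarrow> integral\<^sup>L mu f"
proof -
  obtain B where "\<And>s. s \<in> C \<Longrightarrow> norm (f s) \<le> B"
    using continuous_on_compact_bound[OF C f(2)] by blast
  with support have "AE s in mu. norm (f s) \<le> B"
    by (auto elim: eventually_mono)
  then show ?thesis
    by (rule strong_law_bounded_function[OF indep distr f(1)])
qed

lemma (in prob_space) AE_all_in_support:
  fixes Z :: "nat \<Rightarrow> 'a \<Rightarrow> 'w::topological_space"
  assumes "\<And>i. Z i \<in> borel_measurable M" and "\<And>i. distr M borel (Z i) = mu"
    and "C \<in> sets borel" and "AE s in mu. s \<in> C"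
  shows "AE x in M. \<forall>i. Z i x \<in> C"
proof -
  have "AE x in M. Z i x \<in> C" for i
    using assms(4) unfolding assms(2)[of i, symmetric] by (subst (asm) AE_distr_iff) (simp_all add: assms)
  then show ?thesis
    by (simp add: AE_all_countable)
qed

lemma (in prob_space) uniform_strong_law_kernel:
  fixes Z :: "nat \<Rightarrow> 'a \<Rightarrow> 'w::{metric_space, second_countable_topology}"
    and \<phi> :: "'w \<Rightarrow> 'w \<Rightarrow> 'x::euclidean_space"
  assumes indep: "indep_vars (\<lambda>_. borel) Z UNIV" and distr: "\<And>i. distr M borel (Z i) = mu"
    and C: "compact C" and support: "AE s in mu. s \<in> C"
    and \<phi>: "continuous_on UNIV (\<lambda>(z, s). \<phi> z s)"
  shows "AE x in M. uniform_limit C (\<lambda>N z. (1 / real N) *\<^sub>R (\<Sum>i=1..N. \<phi> z (Z i x)))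
    (\<lambda>z. \<integral>s. \<phi> z s \<partial>mu) sequentially"
proof -
  have [measurable]: "Z i \<in> borel_measurable M" for i
    using indep by (auto simp: indep_vars_def)
  have mu: "prob_space mu" "sets mu = sets borel"
    unfolding distr[of 0, symmetric] by (simp_all add: prob_space_distr)
  obtain D where D: "countable D" "D \<subseteq> C" "C \<subseteq> closure D"
    using separable by blast
  have in_C: "AE x in M. \<forall>i. Z i x \<in> C"
    using distr support by (intro AE_all_in_support) (simp_all add: borel_closed compact_imp_closed[OF C])
  have "AE x in M. (\<lambda>N. (1 / real N) *\<^sub>R (\<Sum>i=1..N. \<phi> d (Z i x))) \<longlonglongrightarrow> (\<integral>s. \<phi> d s \<partial>mu)" for d
    using continuous_on_slice[OF \<phi>] by (intro strong_law_continuous_on_support[OF indep distr C support]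
        borel_measurable_continuous_onI continuous_on_subset[OF continuous_on_slice[OF \<phi>]]) auto
  then have at_D: "AE x in M. \<forall>d\<in>D.
      (\<lambda>N. (1 / real N) *\<^sub>R (\<Sum>i=1..N. \<phi> d (Z i x))) \<longlonglongrightarrow> (\<integral>s. \<phi> d s \<partial>mu)"
    by (simp add: AE_ball_countable[OF D(1)])
  have \<Phi>: "continuous_on C (\<lambda>z. \<integral>s. \<phi> z s \<partial>mu)"
    using mu C support \<phi> by (rule continuous_on_parametric_integral_compact_support)
  from in_C at_D show ?thesis
  proof eventually_elim
    case (elim x)
    then show ?case
      using C D(2,3) continuous_on_subset[OF \<phi> subset_UNIV] \<Phi> by (intro uniform_limit_kernel_averages) auto
  qed
qed

lemma (in prob_space) strong_law_self_normalized_kernel: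
  fixes Z :: "nat \<Rightarrow> 'a \<Rightarrow> 'w::{metric_space, second_countable_topology}"
    and k :: "'w \<Rightarrow> 'w \<Rightarrow> real" and \<phi> :: "'w \<Rightarrow> 'w \<Rightarrow> 'x::euclidean_space"
  assumes indep: "indep_vars (\<lambda>_. borel) Z UNIV" and distr: "\<And>i. distr M borel (Z i) = mu"
    and C: "compact C" and support: "AE s in mu. s \<in> C"
    and k: "continuous_on UNIV (\<lambda>(z, s). k z s)" and k_pos: "\<And>z s. 0 < k z s"
    and \<phi>: "continuous_on UNIV (\<lambda>(z, s). \<phi> z s)"
  shows "AE x in M. (\<lambda>N. (1 / real N) *\<^sub>R
      (\<Sum>j=1..N. (1 / (\<Sum>t=1..N. k (Z j x) (Z t x))) *\<^sub>R (\<Sum>i=1..N. \<phi> (Z j x) (Z i x))))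
    \<longlonglongrightarrow> (\<integral>z. (1 / (\<integral>s. k z s \<partial>mu)) *\<^sub>R (\<integral>s. \<phi> z s \<partial>mu) \<partial>mu)"
proof -
  define G where "G z = (\<integral>s. k z s \<partial>mu)" for z
  define H where "H z = (\<integral>s. \<phi> z s \<partial>mu)" for z
  have [measurable]: "Z i \<in> borel_measurable M" for i
    using indep by (auto simp: indep_vars_def)
  have mu: "prob_space mu" "sets mu = sets borel"
    unfolding distr[of 0, symmetric] by (simp_all add: prob_space_distr)
  interpret mu: prob_space mu
    by (rule mu(1))
  have "0 < (\<lambda>(z, s). k z s) p" for p
    using k_pos by (simp add: split_beta)
  then obtain c where "c > 0" and c_le: "\<And>p. p \<in> C \<times> C \<Longrightarrow> c \<le> (\<lambda>(z, s). k z s) p"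
    using continuous_on_compact_pos_lower_bound[OF compact_Times[OF C C] continuous_on_subset[OF k subset_UNIV]]
    by blast
  have c: "c \<le> k z s" if "z \<in> C" "s \<in> C" for z s
    using c_le[of "(z, s)"] that by simp
  have G_lower: "c \<le> G z" if "z \<in> C" for z
  proof -
    have "(\<integral>s. c \<partial>mu) \<le> G z"
      unfolding G_def using support c[OF that] mu(2) C continuous_on_slice[OF k]
      by (intro integral_mono_AE integrable_continuous_compact_support mu.finite_measure_axioms)
        (auto elim: eventually_mono)
    then show ?thesis
      by (simp add: mu.prob_space)
  qed
  have G_cont: "continuous_on C G" and H_cont: "continuous_on C H"
    unfolding G_def H_def using mu C support k \<phi> by (auto intro: continuous_on_parametric_integral_compact_support)
  then have H_bounded: "bounded (H ` C)"
    by (intro compact_imp_bounded compact_continuous_image C)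
  define F where "F = (\<lambda>z. (1 / G z) *\<^sub>R H z)"
  have "F \<in> borel_measurable borel"
    unfolding F_def G_def H_def using mu k \<phi>
    by (intro borel_measurable_scaleR borel_measurable_divide borel_measurable_const
        borel_measurable_parametric_integral mu.sigma_finite_measure_axioms) simp_all
  moreover have "continuous_on C F"
    unfolding F_def using G_cont H_cont G_lower \<open>c > 0\<close> by (intro continuous_intros) (auto dest: G_lower)
  ultimately have F_lim: "AE x in M. (\<lambda>N. (1 / real N) *\<^sub>R (\<Sum>j=1..N. F (Z j x))) \<longlonglongrightarrow> integral\<^sup>L mu F"
    by (intro strong_law_continuous_on_support[OF indep distr C support])
  have in_C: "AE x in M. \<forall>i. Z i x \<in> C"
    using distr support by (intro AE_all_in_support) (simp_all add: borel_closed compact_imp_closed[OF C])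
  from in_C F_lim uniform_strong_law_kernel[OF indep distr C support k]
    uniform_strong_law_kernel[OF indep distr C support \<phi>]
  show ?thesis
  proof eventually_elim
    case (elim x)
    then show ?case
      using G_lower \<open>c > 0\<close> H_bounded
      by (intro tendsto_self_normalized_average[where C = C and c = c]) (simp_all add: F_def G_def H_def)
  qed
qed

theorem mainTheorem4:
  fixes M :: "'a measure"
    and mu :: "'w::euclidean_space measure"
    and Q K :: "'w \<Rightarrow> 'k::euclidean_space"
    and V :: "'w \<Rightarrow> 'v::euclidean_space"
    and Z :: "nat \<Rightarrow> 'a \<Rightarrow> 'w"
    and tau :: real
  assumes "prob_space M"
    and "tau > 0"
    and "linear Q" and "linear K" and "linear V"
    and "prob_space mu" and "sets mu = sets borel"
    and "\<exists>B. bounded B \<and> B \<in> sets mu \<and> emeasure mu B = 1"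
    and "\<And>i. Z i \<in> borel_measurable M"
    and "prob_space.indep_vars M (\<lambda>_. borel) Z UNIV"
    and "\<And>i. distr M borel (Z i) = mu"
  shows "AE \<omega> in M.
    (\<lambda>N. (1 / real N) *\<^sub>R
       (\<Sum>j=1..N. (1 / (\<Sum>t=1..N. exp ((Q (Z j \<omega>) \<bullet> K (Z t \<omega>)) / tau))) *\<^sub>R
          (\<Sum>i=1..N. exp ((Q (Z j \<omega>) \<bullet> K (Z i \<omega>)) / tau) *\<^sub>R V (Z i \<omega>))))
    \<longlonglongrightarrow>
    integral\<^sup>L mu (\<lambda>z. (1 / integral\<^sup>L mu (\<lambda>s. exp ((Q z \<bullet> K s) / tau))) *\<^sub>R
        integral\<^sup>L mu (\<lambda>z'. exp ((Q z \<bullet> K z') / tau) *\<^sub>R V z'))"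
proof -
  interpret prob_space M by fact
  interpret mu: prob_space mu by fact
  obtain B where B: "bounded B" "B \<in> sets mu" "emeasure mu B = 1"
    using assms(8) by blast
  then have "AE s in mu. s \<in> B"
    by (subst mu.AE_in_set_eq_1) (simp_all add: mu.emeasure_eq_measure)
  then have support: "AE s in mu. s \<in> closure B"
    by (auto elim: eventually_mono intro: closure_subset[THEN subsetD])
  have Q: "bounded_linear Q" and K: "bounded_linear K" and V: "bounded_linear V"
    using assms(3-5) by (simp_all add: linear_conv_bounded_linear)
  have "continuous_on UNIV (\<lambda>(z, s). exp ((Q z \<bullet> K s) / tau))"
    "continuous_on UNIV (\<lambda>(z, s). exp ((Q z \<bullet> K s) / tau) *\<^sub>R V s)"
    unfolding split_beta' using \<open>tau > 0\<close>
    by (intro continuous_intros bounded_linear.continuous_on[OF Q] bounded_linear.continuous_on[OF K]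
        bounded_linear.continuous_on[OF V]; simp)+
  from strong_law_self_normalized_kernel[OF assms(10,11) _ support this(1) _ this(2)] show ?thesis
    using B(1) by (simp add: compact_closure)
qed

end
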